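(* For every injective function $f:M\to N$, the function $\mathcal{PP}_b(f):\mathcal{PP}_b(M)\to\mathcal{PP}_b(N)$ is injective.
   Context: For a set $M$ whose elements are treated as atoms (urelements, distinct from every set built below), let $T_1=\mathcal{P}(M)$, $T_{n+1}=T_n\cup\mathcal{P}(T_n)$, and $\mathcal{PP}_b(M)=\bigcup_{n\ge 1}T_n$ (so $\mathcal{P}(M)\subseteq\mathcal{PP}_b(M)$, every subset of $\mathcal{PP}_b(M)$ of finite nesting depth is an element, but elements of $M$ are not elements of $\mathcal{PP}_b(M)$). For $f:M\to N$, $\mathcal{PP}_b(f)$ is defined recursively on $X\in\mathcal{PP}_b(M)$ by $\mathcal{PP}_b(f)(X)=\{f(x)\mid x\in X\cap M\}\cup\{\mathcal{PP}_b(f)(x)\mid x\in X\setminus M\}$. *)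

theory Defs
  imports Main
begin

text \<open>A universe with urelements is given by a type 'v, a predicate at marking the
  atoms (urelements) and a function mm giving the elements of each non-atom.
  Tlev at mm M n is the level T_(n+1) of the paper (shifted by one so that it
  starts at 0):  T_1 = P(M),  T_(n+1) = T_n \<union> P(T_n).\<close>

primrec Tlev :: "('v \<Rightarrow> bool) \<Rightarrow> ('v \<Rightarrow> 'v set) \<Rightarrow> 'v set \<Rightarrow> nat \<Rightarrow> 'v set" where
  "Tlev at mm M 0 = {X. \<not> at X \<and> mm X \<subseteq> M}"
| "Tlev at mm M (Suc n) = Tlev at mm M n \<union> {X. \<not> at X \<and> mm X \<subseteq> Tlev at mm M n}"

definition PPb :: "('v \<Rightarrow> bool) \<Rightarrow> ('v \<Rightarrow> 'v set) \<Rightarrow> 'v set \<Rightarrow> 'v set" where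
  "PPb at mm M = (\<Union>n. Tlev at mm M n)"

definition ur_universe :: "('v \<Rightarrow> bool) \<Rightarrow> ('v \<Rightarrow> 'v set) \<Rightarrow> 'v set \<Rightarrow> bool" where
  "ur_universe at mm M \<longleftrightarrow>
     (\<forall>x\<in>M. at x) \<and>
     (\<forall>X Y. \<not> at X \<longrightarrow> \<not> at Y \<longrightarrow> mm X = mm Y \<longrightarrow> X = Y) \<and>
     (\<forall>S. S \<subseteq> M \<longrightarrow> (\<exists>X. \<not> at X \<and> mm X = S)) \<and>
     (\<forall>n S. S \<subseteq> Tlev at mm M n \<longrightarrow> (\<exists>X. \<not> at X \<and> mm X = S))"

definition PPb_step :: "('v \<Rightarrow> 'v set) \<Rightarrow> 'v set \<Rightarrow> ('w \<Rightarrow> bool) \<Rightarrow> ('w \<Rightarrow> 'w set)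
    \<Rightarrow> ('v \<Rightarrow> 'w) \<Rightarrow> ('v \<Rightarrow> 'w) \<Rightarrow> 'v \<Rightarrow> 'w" where
  "PPb_step mmV M atW mmW f g X =
     (SOME Y. \<not> atW Y \<and> mmW Y = f ` (mmV X \<inter> M) \<union> g ` (mmV X - M))"

primrec PPb_lev :: "('v \<Rightarrow> bool) \<Rightarrow> ('v \<Rightarrow> 'v set) \<Rightarrow> 'v set \<Rightarrow> ('w \<Rightarrow> bool) \<Rightarrow> ('w \<Rightarrow> 'w set)
    \<Rightarrow> ('v \<Rightarrow> 'w) \<Rightarrow> nat \<Rightarrow> 'v \<Rightarrow> 'w" where
  "PPb_lev atV mmV M atW mmW f 0 = PPb_step mmV M atW mmW f (\<lambda>_. undefined)"
| "PPb_lev atV mmV M atW mmW f (Suc n) =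
     (\<lambda>X. if X \<in> Tlev atV mmV M n then PPb_lev atV mmV M atW mmW f n X
          else PPb_step mmV M atW mmW f (PPb_lev atV mmV M atW mmW f n) X)"

definition PPb_map :: "('v \<Rightarrow> bool) \<Rightarrow> ('v \<Rightarrow> 'v set) \<Rightarrow> 'v set \<Rightarrow> ('w \<Rightarrow> bool) \<Rightarrow> ('w \<Rightarrow> 'w set)
    \<Rightarrow> ('v \<Rightarrow> 'w) \<Rightarrow> 'v \<Rightarrow> 'w" where
  "PPb_map atV mmV M atW mmW f X =
     PPb_lev atV mmV M atW mmW f (LEAST n. X \<in> Tlev atV mmV M n) X"

end

theory Submission
  imports Defs
begin

text \<open>PP_b(f) sends a set X to a set whose atoms are the f-images of the atoms of X and
  whose non-atoms are the PP_b(f)-images of the non-atoms of X. Since atoms and non-atoms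
  of the target universe are disjoint, an equation PP_b(f) X = PP_b(f) Y splits into one
  between the atom parts, settled by injectivity of f, and one between the non-atom parts,
  settled by induction on the level of X and Y; extensionality then gives X = Y.\<close>

lemma Tlev_nonatom: "X \<in> Tlev at mm M n \<Longrightarrow> \<not> at X"
  by (induction n) auto

lemma Tlev_mono: "m \<le> n \<Longrightarrow> Tlev at mm M m \<subseteq> Tlev at mm M n"
  by (induction n) (auto simp: le_Suc_eq)

lemma Tlev_Suc_elems: "X \<in> Tlev at mm M (Suc n) \<Longrightarrow> mm X - M \<subseteq> Tlev at mm M n"
proof (induction n arbitrary: X)
  case (Suc n)
  then show ?case using Tlev_mono[of n "Suc n" at mm M] by auto
qed auto

lemma Tlev_elems:
  assumes "X \<in> Tlev at mm M n"
  shows "mm X - M \<subseteq> Tlev at mm M n"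
proof (cases n)
  case (Suc m)
  then show ?thesis
    using assms Tlev_Suc_elems[of X at mm M m] Tlev_mono[of m "Suc m" at mm M] by auto
qed (use assms in auto)

lemma PPb_lev_stable:
  "Z \<in> Tlev atV mmV M n \<Longrightarrow> PPb_lev atV mmV M atW mmW f (k + n) Z = PPb_lev atV mmV M atW mmW f n Z"
proof (induction k)
  case (Suc k)
  have "Z \<in> Tlev atV mmV M (k + n)" using Suc.prems Tlev_mono[of n "k + n" atV mmV M] by auto
  then show ?case using Suc by simp
qed simp

lemma PPb_lev_eq_PPb_map:
  assumes "Z \<in> Tlev atV mmV M n"
  shows "PPb_lev atV mmV M atW mmW f n Z = PPb_map atV mmV M atW mmW f Z"
proof -
  define L where "L = (LEAST n. Z \<in> Tlev atV mmV M n)"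
  have "Z \<in> Tlev atV mmV M L" unfolding L_def using assms by (rule LeastI)
  then have "PPb_lev atV mmV M atW mmW f ((n - L) + L) Z = PPb_lev atV mmV M atW mmW f L Z"
    by (rule PPb_lev_stable)
  moreover have "L \<le> n" unfolding L_def using assms by (rule Least_le)
  ultimately show ?thesis unfolding PPb_map_def L_def[symmetric] by simp
qed

lemma PPb_step_spec:
  assumes "\<not> atW Y" and "mmW Y = f ` (mmV X \<inter> M) \<union> g ` (mmV X - M)"
  shows "\<not> atW (PPb_step mmV M atW mmW f g X)
    \<and> mmW (PPb_step mmV M atW mmW f g X) = f ` (mmV X \<inter> M) \<union> g ` (mmV X - M)"
  unfolding PPb_step_def by (rule someI[of _ Y]) (use assms in blast)

lemma ur_universe_atom: "ur_universe at mm M \<Longrightarrow> x \<in> M \<Longrightarrow> at x"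
  unfolding ur_universe_def by blast

lemma ur_universe_ext:
  "ur_universe at mm M \<Longrightarrow> \<not> at X \<Longrightarrow> \<not> at Y \<Longrightarrow> mm X = mm Y \<Longrightarrow> X = Y"
  unfolding ur_universe_def by blast

lemma ur_universe_realises_subset:
  "ur_universe at mm M \<Longrightarrow> S \<subseteq> M \<Longrightarrow> \<exists>X. \<not> at X \<and> mm X = S"
  unfolding ur_universe_def by blast

lemma ur_universe_realises_Tlev_subset:
  "ur_universe at mm M \<Longrightarrow> S \<subseteq> Tlev at mm M n \<Longrightarrow> \<exists>X. \<not> at X \<and> mm X = S"
  unfolding ur_universe_def by blast

lemma Un_image_cancel:
  assumes "f ` (A \<union> A') \<subseteq> Q" and "g ` (B \<union> B') \<inter> Q = {}"
    and "inj_on f (A \<union> A')" and "inj_on g (B \<union> B')"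
    and "f ` A \<union> g ` B = f ` A' \<union> g ` B'"
  shows "A = A'" and "B = B'"
proof -
  have "f ` A = (f ` A \<union> g ` B) \<inter> Q" "f ` A' = (f ` A' \<union> g ` B') \<inter> Q"
    using assms(1,2) by blast+
  then show "A = A'" using assms(3,5) inj_on_image_eq_iff[OF assms(3)] by auto
  have "g ` B = (f ` A \<union> g ` B) - Q" "g ` B' = (f ` A' \<union> g ` B') - Q"
    using assms(1,2) by blast+
  then show "B = B'" using assms(4,5) inj_on_image_eq_iff[OF assms(4)] by auto
qed

locale PPb_setting =
  fixes atV :: "'v \<Rightarrow> bool" and mmV :: "'v \<Rightarrow> 'v set" and M :: "'v set"
    and atW :: "'w \<Rightarrow> bool" and mmW :: "'w \<Rightarrow> 'w set" and N :: "'w set"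
    and f :: "'v \<Rightarrow> 'w"
  assumes V: "ur_universe atV mmV M" and W: "ur_universe atW mmW N"
    and f_into: "f ` M \<subseteq> N"
begin

abbreviation "TV \<equiv> Tlev atV mmV M"
abbreviation "TW \<equiv> Tlev atW mmW N"
abbreviation "F \<equiv> PPb_map atV mmV M atW mmW f"
abbreviation "F_lev \<equiv> PPb_lev atV mmV M atW mmW f"

lemma F_lev_eq_F: "X \<in> TV n \<Longrightarrow> F_lev n X = F X"
  by (rule PPb_lev_eq_PPb_map)

text \<open>Membership in TW n is carried along so that the image at the next level is again
  realised by an element of W.\<close>

lemma PPb_lev_spec:
  "X \<in> TV n \<Longrightarrow> F_lev n X \<in> TW n \<and> mmW (F_lev n X) = f ` (mmV X \<inter> M) \<union> F ` (mmV X - M)"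
proof (induction n arbitrary: X)
  case 0
  then have sub: "mmV X \<subseteq> M" by simp
  then have S: "f ` (mmV X \<inter> M) \<union> (\<lambda>_. undefined) ` (mmV X - M) = f ` mmV X"
    and S': "f ` (mmV X \<inter> M) \<union> F ` (mmV X - M) = f ` mmV X"
    by auto
  have fX: "f ` mmV X \<subseteq> N" using sub f_into by blast
  then obtain Y where "\<not> atW Y" "mmW Y = f ` mmV X"
    using ur_universe_realises_subset[OF W] by blast
  then have "\<not> atW (F_lev 0 X) \<and> mmW (F_lev 0 X) = f ` mmV X"
    using PPb_step_spec[of atW Y mmW f mmV X M "\<lambda>_. undefined"] S by simp
  then show ?case using S' fX by simp
next
  case (Suc n)
  show ?case
  proof (cases "X \<in> TV n")
    case True
    then show ?thesis using Suc.IH by simp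
  next
    case False
    then have sub: "mmV X \<subseteq> TV n" using Suc.prems by simp
    then have "mmV X \<inter> M = {}"
      using ur_universe_atom[OF V] Tlev_nonatom[of _ atV mmV M n] by blast
    then have S: "f ` (mmV X \<inter> M) \<union> F_lev n ` (mmV X - M) = F_lev n ` mmV X"
      and S': "f ` (mmV X \<inter> M) \<union> F ` (mmV X - M) = F ` mmV X"
      by auto
    have agree: "F_lev n ` mmV X = F ` mmV X"
      using sub F_lev_eq_F by (auto intro!: image_cong)
    have inW: "F_lev n ` mmV X \<subseteq> TW n" using Suc.IH sub by blast
    then obtain Y where "\<not> atW Y" "mmW Y = F_lev n ` mmV X"
      using ur_universe_realises_Tlev_subset[OF W] by blast
    then have "\<not> atW (F_lev (Suc n) X) \<and> mmW (F_lev (Suc n) X) = F_lev n ` mmV X"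
      using PPb_step_spec[of atW Y mmW f mmV X M "F_lev n"] S False by simp
    then show ?thesis using S' agree inW by simp
  qed
qed

lemma PPb_map_spec:
  assumes "X \<in> TV n"
  shows "\<not> atW (F X) \<and> mmW (F X) = f ` (mmV X \<inter> M) \<union> F ` (mmV X - M)"
proof -
  have "F X = F_lev n X" using F_lev_eq_F[OF assms] by simp
  then show ?thesis using PPb_lev_spec[OF assms] Tlev_nonatom by metis
qed

lemma PPb_map_eq_cancel:
  assumes inj: "inj_on f M" and F_inj: "inj_on F S"
    and X: "X \<in> TV n" and Y: "Y \<in> TV m"
    and XS: "mmV X - M \<subseteq> S" and YS: "mmV Y - M \<subseteq> S"
    and eq: "F X = F Y"
  shows "X = Y"
proof -
  have atoms: "f ` (mmV X \<inter> M \<union> mmV Y \<inter> M) \<subseteq> {z. atW z}"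
    using f_into ur_universe_atom[OF W] by blast
  have "\<not> atW (F x)" if "x \<in> mmV X - M \<union> (mmV Y - M)" for x
    using that Tlev_elems[OF X] Tlev_elems[OF Y] PPb_map_spec[THEN conjunct1] by blast
  then have nonatoms: "F ` (mmV X - M \<union> (mmV Y - M)) \<inter> {z. atW z} = {}"
    by blast
  have inj_f: "inj_on f (mmV X \<inter> M \<union> mmV Y \<inter> M)"
    using inj by (rule inj_on_subset) blast
  have inj_F: "inj_on F (mmV X - M \<union> (mmV Y - M))"
    using F_inj by (rule inj_on_subset) (use XS YS in blast)
  have "f ` (mmV X \<inter> M) \<union> F ` (mmV X - M) = f ` (mmV Y \<inter> M) \<union> F ` (mmV Y - M)"
    using PPb_map_spec[OF X] PPb_map_spec[OF Y] eq by simp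
  note cancel = Un_image_cancel[OF atoms nonatoms inj_f inj_F this]
  have "mmV X = mmV Y"
    using cancel by blast
  then show "X = Y"
    using ur_universe_ext[OF V] Tlev_nonatom[OF X] Tlev_nonatom[OF Y] by blast
qed

lemma inj_on_PPb_map_Tlev:
  assumes "inj_on f M"
  shows "inj_on F (TV n)"
proof (induction n)
  case 0
  show ?case
  proof (rule inj_onI)
    fix X Y assume X: "X \<in> TV 0" and Y: "Y \<in> TV 0" and "F X = F Y"
    then show "X = Y"
      using PPb_map_eq_cancel[OF assms inj_on_empty X Y] X Y by auto
  qed
next
  case (Suc n)
  show ?case
  proof (rule inj_onI)
    fix X Y assume X: "X \<in> TV (Suc n)" and Y: "Y \<in> TV (Suc n)" and "F X = F Y"
    then show "X = Y"
      using PPb_map_eq_cancel[OF assms Suc.IH X Y Tlev_Suc_elems[OF X] Tlev_Suc_elems[OF Y]]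
      by blast
  qed
qed

lemma inj_on_PPb_map:
  assumes "inj_on f M"
  shows "inj_on F (PPb atV mmV M)"
proof (rule inj_onI)
  fix X Y assume "X \<in> PPb atV mmV M" "Y \<in> PPb atV mmV M" and eq: "F X = F Y"
  then obtain a b where "X \<in> TV a" "Y \<in> TV b" unfolding PPb_def by blast
  then have "X \<in> TV (max a b)" "Y \<in> TV (max a b)"
    using Tlev_mono[of a "max a b" atV mmV M] Tlev_mono[of b "max a b" atV mmV M] by auto
  then show "X = Y" using inj_on_PPb_map_Tlev[OF assms] eq by (auto dest: inj_onD)
qed

end

theorem mainTheorem5:
  fixes atV :: "'v \<Rightarrow> bool" and mmV :: "'v \<Rightarrow> 'v set" and M :: "'v set"
    and atW :: "'w \<Rightarrow> bool" and mmW :: "'w \<Rightarrow> 'w set" and N :: "'w set"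
    and f :: "'v \<Rightarrow> 'w"
  assumes "ur_universe atV mmV M"
    and "ur_universe atW mmW N"
    and "f ` M \<subseteq> N"
    and "inj_on f M"
  shows "inj_on (PPb_map atV mmV M atW mmW f) (PPb atV mmV M)"
proof -
  interpret PPb_setting atV mmV M atW mmW N f
    using assms(1-3) by unfold_locales
  show ?thesis using inj_on_PPb_map[OF assms(4)] .
qed

end
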